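(* Let $n\ge3$ and let $A$ be a real symmetric diagonally dominant $n\times n$ matrix all of whose entries are positive. Let $m$ be the largest off-diagonal entry of $A$, $\ell$ the smallest entry of $A$, and $\delta=\max_i\Delta_i(A)$. Then the condition number $\kappa_\infty(A)=\|A\|_\infty\|A^{-1}\|_\infty$ satisfies $$\kappa_\infty(A)\le\frac{(2m(n-1)+\delta)(3n-4)}{2\ell(n-2)(n-1)}.$$
   Context: For a real $n\times n$ matrix $A$, $\Delta_i(A)=|A_{ii}|-\sum_{j\ne i}|A_{ij}|$; $A$ is diagonally dominant if $\Delta_i(A)\ge0$ for all $i$. $\|A\|_\infty$ is the maximum absolute row sum of $A$. *)

theory Defs
  imports "HOL-Analysis.Analysis"
begin

definition Delta :: "real^'n^'n \<Rightarrow> 'n \<Rightarrow> real" where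
  "Delta A i = \<bar>A $ i $ i\<bar> - (\<Sum>j\<in>UNIV - {i}. \<bar>A $ i $ j\<bar>)"

definition diag_dominant :: "real^'n^'n \<Rightarrow> bool" where
  "diag_dominant A \<longleftrightarrow> (\<forall>i. Delta A i \<ge> 0)"

definition inf_norm :: "real^'n^'n \<Rightarrow> real" where
  "inf_norm A = Max (range (\<lambda>i. \<Sum>j\<in>UNIV. \<bar>A $ i $ j\<bar>))"

definition cond_inf :: "real^'n^'n \<Rightarrow> real" where
  "cond_inf A = inf_norm A * inf_norm (matrix_inv A)"

end

theory Submission
  imports Defs
begin

(* Let A be such an n x n matrix (n \<ge> 3) and L > 0 a lower bound for its off-diagonal entries.
   The heart of the proof is that every x with |(A x)_i| \<le> 1 for all i satisfies
     |x_k| \<le> (3n - 4) / (2 L (n - 2) (n - 1)).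
   Writing row i of A x as Delta_i x_i + sum_{j \<noteq> i} A_ij (x_i + x_j) and symmetrising, one gets for
   every weight vector lam that respects the signs of the entries and of their pairwise sums
     L * sum_i lam_i ((n - 2) x_i + sum_j x_j) \<le> sum_i lam_i (A x)_i \<le> sum_i |lam_i|.
   Choosing lam = +-1 on sets of large positive/negative entries of x yields linear constraints,
   and a case analysis on these constraints gives the bound (a purely real-variable argument,
   carried out in a context).  A uniform bound on such solutions makes A invertible and bounds the
   row sums of its inverse; the row sums of A are at most 2 m (n - 1) + delta. *)

lemma sum_offdiag_swap:
  fixes F :: "'a::finite \<Rightarrow> 'a \<Rightarrow> 'b::comm_monoid_add"
  shows "(\<Sum>i\<in>UNIV. \<Sum>j\<in>UNIV - {i}. F i j) = (\<Sum>i\<in>UNIV. \<Sum>j\<in>UNIV - {i}. F j i)"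
proof -
  have off_diag: "(\<Sum>j\<in>UNIV - {i}. G i j) = (\<Sum>j\<in>UNIV. if i = j then 0 else G i j)"
    for G :: "'a \<Rightarrow> 'a \<Rightarrow> 'b" and i
    by (simp add: sum.If_cases Compl_eq_Diff_UNIV)
  have "(\<Sum>i\<in>UNIV. \<Sum>j\<in>UNIV - {i}. F i j) = (\<Sum>i\<in>UNIV. \<Sum>j\<in>UNIV. if i = j then 0 else F i j)"
    by (simp add: off_diag)
  also have "\<dots> = (\<Sum>j\<in>UNIV. \<Sum>i\<in>UNIV. if i = j then 0 else F i j)"
    by (rule sum.swap)
  also have "\<dots> = (\<Sum>i\<in>UNIV. \<Sum>j\<in>UNIV - {i}. F j i)"
    by (simp add: off_diag[of "\<lambda>i j. F j i"] eq_commute)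
  finally show ?thesis .
qed

lemma sum_offdiag_symmetrize:
  fixes B :: "'a::finite \<Rightarrow> 'a \<Rightarrow> real"
  assumes "\<And>i j. B i j = B j i"
  shows "2 * (\<Sum>i\<in>UNIV. \<Sum>j\<in>UNIV - {i}. B i j * lam i)
    = (\<Sum>i\<in>UNIV. \<Sum>j\<in>UNIV - {i}. B i j * (lam i + lam j))"
proof -
  have "(\<Sum>i\<in>UNIV. \<Sum>j\<in>UNIV - {i}. B i j * lam i) = (\<Sum>i\<in>UNIV. \<Sum>j\<in>UNIV - {i}. B i j * lam j)"
    using sum_offdiag_swap[of "\<lambda>i j. B i j * lam i"] assms by simp
  then show ?thesis
    by (simp add: distrib_left sum.distrib)
qed

lemma row_decomposition:
  fixes A :: "real^'n^'n"
  assumes "\<And>i j. 0 \<le> A $ i $ j"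
  shows "(A *v x) $ i = Delta A i * x $ i + (\<Sum>j\<in>UNIV - {i}. A $ i $ j * (x $ i + x $ j))"
proof -
  have "(A *v x) $ i = A $ i $ i * x $ i + (\<Sum>j\<in>UNIV - {i}. A $ i $ j * x $ j)"
    by (simp add: matrix_vector_mult_def sum.remove)
  moreover have "A $ i $ i = Delta A i + (\<Sum>j\<in>UNIV - {i}. A $ i $ j)"
    using assms by (simp add: Delta_def)
  moreover have "(\<Sum>j\<in>UNIV - {i}. A $ i $ j * (x $ i + x $ j))
      = (\<Sum>j\<in>UNIV - {i}. A $ i $ j) * x $ i + (\<Sum>j\<in>UNIV - {i}. A $ i $ j * x $ j)"
    by (simp add: distrib_left sum.distrib sum_distrib_right)
  ultimately show ?thesis
    by (simp add: algebra_simps)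
qed

lemma sum_offdiag_pair_sums:
  fixes x :: "'a::finite \<Rightarrow> real"
  shows "(\<Sum>j\<in>UNIV - {i}. x i + x j) = (real CARD('a) - 2) * x i + (\<Sum>j\<in>UNIV. x j)"
proof -
  have "real (card (UNIV - {i} :: 'a set)) = real CARD('a) - 1"
    by (simp add: card_Diff_singleton Suc_le_eq)
  then show ?thesis
    by (simp add: sum.distrib sum_diff1 algebra_simps)
qed

definition sign_compatible :: "('a \<Rightarrow> real) \<Rightarrow> ('a \<Rightarrow> real) \<Rightarrow> bool" where
  "sign_compatible lam x \<longleftrightarrow>
     (\<forall>i. 0 \<le> lam i * x i) \<and> (\<forall>i j. i \<noteq> j \<longrightarrow> 0 \<le> (lam i + lam j) * (x i + x j))"

(* For sign compatible weights lam, the weighted sum of the entries of A x is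
   at least L times the weighted sum of the off-diagonal pair sums, sum_{j \<noteq> i} (x_i + x_j):
   the diagonal excesses contribute nonnegatively, and after symmetrising, every off-diagonal
   term is a nonnegative quantity multiplied by A_ij \<ge> L. *)
lemma weighted_row_sum_lower_bound:
  fixes A :: "real^'n^'n" and x :: "real^'n"
  assumes sym: "\<And>i j. A $ i $ j = A $ j $ i" and nonneg: "\<And>i j. 0 \<le> A $ i $ j"
    and dd: "\<And>i. 0 \<le> Delta A i" and off_ge: "\<And>i j. i \<noteq> j \<Longrightarrow> L \<le> A $ i $ j"
    and compat: "sign_compatible lam (($) x)"
  shows "L * (\<Sum>i\<in>UNIV. lam i * ((real CARD('n) - 2) * x $ i + (\<Sum>j\<in>UNIV. x $ j)))
    \<le> (\<Sum>i\<in>UNIV. lam i * (A *v x) $ i)"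
proof -
  define W where "W i j = x $ i + x $ j" for i j
  have W_sym: "W i j = W j i" for i j by (simp add: W_def add.commute)
  have "2 * (\<Sum>i\<in>UNIV. \<Sum>j\<in>UNIV - {i}. L * W i j * lam i)
      = (\<Sum>i\<in>UNIV. \<Sum>j\<in>UNIV - {i}. L * W i j * (lam i + lam j))"
    by (rule sum_offdiag_symmetrize) (simp add: W_sym)
  also have "\<dots> \<le> (\<Sum>i\<in>UNIV. \<Sum>j\<in>UNIV - {i}. A $ i $ j * W i j * (lam i + lam j))"
  proof (intro sum_mono)
    fix i j :: 'n assume "j \<in> UNIV - {i}"
    then have "0 \<le> W i j * (lam i + lam j)" and "L \<le> A $ i $ j"
      using compat off_ge by (auto simp: sign_compatible_def W_def mult.commute)
    then show "L * W i j * (lam i + lam j) \<le> A $ i $ j * W i j * (lam i + lam j)"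
      by (simp add: mult.assoc mult_right_mono)
  qed
  also have "\<dots> = 2 * (\<Sum>i\<in>UNIV. \<Sum>j\<in>UNIV - {i}. A $ i $ j * W i j * lam i)"
    by (rule sum_offdiag_symmetrize[symmetric]) (simp add: sym W_sym)
  finally have off_diag: "(\<Sum>i\<in>UNIV. \<Sum>j\<in>UNIV - {i}. L * W i j * lam i)
      \<le> (\<Sum>i\<in>UNIV. \<Sum>j\<in>UNIV - {i}. A $ i $ j * W i j * lam i)"
    by simp
  have diag: "0 \<le> (\<Sum>i\<in>UNIV. Delta A i * (lam i * x $ i))"
    using compat by (intro sum_nonneg mult_nonneg_nonneg[OF dd]) (auto simp: sign_compatible_def)
  have "L * (\<Sum>i\<in>UNIV. lam i * ((real CARD('n) - 2) * x $ i + (\<Sum>j\<in>UNIV. x $ j)))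
      = (\<Sum>i\<in>UNIV. \<Sum>j\<in>UNIV - {i}. L * W i j * lam i)"
  proof -
    have "(\<Sum>j\<in>UNIV - {i}. L * W i j * lam i) = L * lam i * (\<Sum>j\<in>UNIV - {i}. W i j)" for i
      by (simp add: sum_distrib_left mult_ac)
    then show ?thesis
      by (simp add: W_def sum_offdiag_pair_sums sum_distrib_left mult_ac)
  qed
  also have "\<dots> \<le> (\<Sum>i\<in>UNIV. Delta A i * (lam i * x $ i))
      + (\<Sum>i\<in>UNIV. \<Sum>j\<in>UNIV - {i}. A $ i $ j * W i j * lam i)"
    using off_diag diag by linarith
  also have "\<dots> = (\<Sum>i\<in>UNIV. lam i * (A *v x) $ i)"
    unfolding sum.distrib[symmetric]
    by (intro sum.cong refl) (simp add: row_decomposition[OF nonneg] W_def algebra_simps sum_distrib_left)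
  finally show ?thesis .
qed

definition sign_test :: "'a set \<Rightarrow> 'a set \<Rightarrow> 'a \<Rightarrow> real" where
  "sign_test P N i = (if i \<in> P then 1 else if i \<in> N then -1 else 0)"

definition top_signed :: "('a \<Rightarrow> real) \<Rightarrow> 'a set \<Rightarrow> 'a set \<Rightarrow> bool" where
  "top_signed u P N \<longleftrightarrow> P \<inter> N = {} \<and> (\<forall>i\<in>P. 0 \<le> u i) \<and> (\<forall>i\<in>N. u i \<le> 0) \<and>
     (\<forall>i\<in>P \<union> N. \<forall>j. j \<notin> P \<union> N \<longrightarrow> \<bar>u j\<bar> \<le> \<bar>u i\<bar>)"

lemma top_signed_scale:
  assumes "0 < c"
  shows "top_signed (\<lambda>i. c * u i) P N \<longleftrightarrow> top_signed u P N"
  using assms by (simp add: top_signed_def abs_mult zero_le_mult_iff mult_le_0_iff)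

lemma sign_test_compatible:
  assumes "top_signed u P N"
  shows "sign_compatible (sign_test P N) u"
  unfolding sign_compatible_def
proof (intro conjI allI impI)
  have disj: "P \<inter> N = {}" and P_nonneg: "\<And>i. i \<in> P \<Longrightarrow> 0 \<le> u i"
    and N_nonpos: "\<And>i. i \<in> N \<Longrightarrow> u i \<le> 0"
    and top: "\<And>i j. i \<in> P \<union> N \<Longrightarrow> j \<notin> P \<union> N \<Longrightarrow> \<bar>u j\<bar> \<le> \<bar>u i\<bar>"
    using assms by (auto simp: top_signed_def)
  show "0 \<le> sign_test P N i * u i" for i
    using disj P_nonneg N_nonpos by (auto simp: sign_test_def)
  show "0 \<le> (sign_test P N i + sign_test P N j) * (u i + u j)" for i j
    using disj P_nonneg[of i] P_nonneg[of j] N_nonpos[of i] N_nonpos[of j] top[of i j] top[of j i]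
    by (cases "i \<in> N"; cases "j \<in> N"; auto simp: sign_test_def abs_if split: if_splits)
qed

lemma sum_sign_test:
  fixes P N :: "'a::finite set"
  assumes "P \<inter> N = {}"
  shows "(\<Sum>i\<in>UNIV. sign_test P N i * f i) = sum f P - sum f N"
proof -
  have "(\<Sum>i\<in>UNIV. sign_test P N i * f i)
      = (\<Sum>i\<in>UNIV. (if i \<in> P then f i else 0) - (if i \<in> N then f i else 0))"
    using assms by (intro sum.cong) (auto simp: sign_test_def)
  then show ?thesis
    by (simp add: sum_subtractf flip: sum.inter_restrict)
qed

lemma sum_abs_sign_test:
  fixes P N :: "'a::finite set"
  assumes "P \<inter> N = {}"
  shows "(\<Sum>i\<in>UNIV. \<bar>sign_test P N i\<bar>) = real (card P) + real (card N)"
proof -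
  have "(\<Sum>i\<in>UNIV. \<bar>sign_test P N i\<bar>)
      = (\<Sum>i\<in>UNIV. (if i \<in> P then 1 else 0) + (if i \<in> N then 1 else 0))"
    using assms by (intro sum.cong) (auto simp: sign_test_def)
  then show ?thesis
    by (simp add: sum.distrib flip: sum.inter_restrict)
qed

lemma bounded_solution_test:
  fixes A :: "real^'n^'n" and y :: "real^'n"
  assumes sym: "\<And>i j. A $ i $ j = A $ j $ i" and nonneg: "\<And>i j. 0 \<le> A $ i $ j"
    and dd: "\<And>i. 0 \<le> Delta A i" and off_ge: "\<And>i j. i \<noteq> j \<Longrightarrow> L \<le> A $ i $ j"
    and bounded: "\<And>i. \<bar>(A *v y) $ i\<bar> \<le> 1"
    and top: "top_signed (($) y) P N"
  shows "L * ((real CARD('n) - 2) * (sum (($) y) P - sum (($) y) N)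
      + (\<Sum>j\<in>UNIV. y $ j) * (real (card P) - real (card N))) \<le> real (card P) + real (card N)"
proof -
  have disj: "P \<inter> N = {}"
    using top by (simp add: top_signed_def)
  have "(\<Sum>i\<in>UNIV. sign_test P N i * ((real CARD('n) - 2) * y $ i + (\<Sum>j\<in>UNIV. y $ j)))
      = (real CARD('n) - 2) * (sum (($) y) P - sum (($) y) N)
        + (\<Sum>j\<in>UNIV. y $ j) * (real (card P) - real (card N))"
  proof -
    have affine: "(\<Sum>i\<in>Q. (real CARD('n) - 2) * y $ i + (\<Sum>j\<in>UNIV. y $ j))
        = (real CARD('n) - 2) * sum (($) y) Q + (\<Sum>j\<in>UNIV. y $ j) * real (card Q)" for Q
      by (simp add: sum.distrib flip: sum_distrib_left)
    show ?thesis
      unfolding sum_sign_test[OF disj] affine by (simp add: algebra_simps)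
  qed
  moreover have "L * (\<Sum>i\<in>UNIV. sign_test P N i * ((real CARD('n) - 2) * y $ i + (\<Sum>j\<in>UNIV. y $ j)))
      \<le> (\<Sum>i\<in>UNIV. sign_test P N i * (A *v y) $ i)"
    by (rule weighted_row_sum_lower_bound[OF sym nonneg dd off_ge sign_test_compatible[OF top]])
  moreover have "\<dots> \<le> (\<Sum>i\<in>UNIV. \<bar>sign_test P N i\<bar>)"
  proof (rule sum_mono)
    fix i
    have "sign_test P N i * (A *v y) $ i \<le> \<bar>sign_test P N i\<bar> * \<bar>(A *v y) $ i\<bar>"
      by (simp add: abs_mult[symmetric])
    also have "\<dots> \<le> \<bar>sign_test P N i\<bar>"
      using bounded[of i] by (simp add: mult_left_le)
    finally show "sign_test P N i * (A *v y) $ i \<le> \<bar>sign_test P N i\<bar>" .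
  qed
  ultimately show ?thesis
    by (simp add: sum_abs_sign_test[OF disj])
qed

lemma sum_ge_point_plus_rest:
  fixes f :: "'a \<Rightarrow> real"
  assumes "finite P" "p \<in> P" "\<And>i. i \<in> P \<Longrightarrow> c \<le> f i"
  shows "f p + (real (card P) - 1) * c \<le> sum f P"
proof -
  have "1 \<le> card P"
    using assms(1,2) by (auto simp: card_gt_0_iff Suc_le_eq)
  then have card_rest: "real (card (P - {p})) = real (card P) - 1"
    using assms(2) by (simp add: card_Diff_singleton of_nat_diff[symmetric])
  have "real (card (P - {p})) * c \<le> sum f (P - {p})"
    using assms(3) by (intro sum_bounded_below) auto
  then have "(real (card P) - 1) * c \<le> sum f (P - {p})"
    unfolding card_rest .
  then show ?thesis
    using assms(1,2) by (simp add: sum.remove)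
qed

(* The arithmetic that closes all cases: a constraint 2t + 2s(h - 2) \<le> h together with
   t - 1 \<le> s gives t \<le> (3h - 4)/(2h - 2), which is monotone in h. *)
lemma ratio_bound:
  fixes t s h n :: real
  assumes "2 \<le> h" "h \<le> n" "t - 1 \<le> s" "2 * t + 2 * s * (h - 2) \<le> h"
  shows "t \<le> (3 * n - 4) / (2 * n - 2)"
proof -
  have "(t - 1) * (h - 2) \<le> s * (h - 2)"
    using assms by (intro mult_right_mono) auto
  then have "t * (2 * h - 2) \<le> 3 * h - 4"
    using assms(4) by (simp add: algebra_simps)
  then have "t \<le> (3 * h - 4) / (2 * h - 2)"
    using assms(1) by (simp add: pos_le_divide_eq)
  also have "\<dots> \<le> (3 * n - 4) / (2 * n - 2)"
    using assms(1,2) by (simp add: frac_le_eq field_simps)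
  finally show ?thesis .
qed

(* Throughout this context u plays the role of L times a solution y of |A y| \<le> 1, p indexes an
   entry of maximal modulus, which is nonnegative, and set_test is the constraint of
   bounded_solution_test; m = n - 2 and s = -(sum of all u). *)
context
  fixes u :: "'n::finite \<Rightarrow> real" and p :: 'n
  assumes card_ge_3: "3 \<le> CARD('n)"
    and u_p_max: "\<And>i. \<bar>u i\<bar> \<le> u p"
    and set_test: "\<And>P N. top_signed u P N \<Longrightarrow>
      (real CARD('n) - 2) * (sum u P - sum u N) + sum u UNIV * (real (card P) - real (card N))
        \<le> real (card P) + real (card N)"
begin

lemma test_at_max: "(real CARD('n) - 2) * u p + sum u UNIV \<le> 1"
proof -
  have "0 \<le> u p"
    using u_p_max[of p] by simp
  then have "top_signed u {p} {}"
    using u_p_max by (auto simp: top_signed_def)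
  from set_test[OF this] show ?thesis
    by simp
qed

(* If all other entries are nonpositive, testing with P = {p} and N = the rest gives the
   constraint of ratio_bound with h = n. *)
lemma isolated_max_estimate:
  assumes "\<And>i. i \<noteq> p \<Longrightarrow> u i \<le> 0"
  shows "2 * ((real CARD('n) - 2) * u p) + 2 * (- sum u UNIV) * (real CARD('n) - 2)
    \<le> real CARD('n)"
proof -
  have "top_signed u {p} (UNIV - {p})"
    using assms u_p_max[of p] by (auto simp: top_signed_def)
  moreover have "real (card (UNIV - {p})) = real CARD('n) - 1"
    by (simp add: card_Diff_singleton Suc_le_eq)
  ultimately show ?thesis
    using set_test[of "{p}" "UNIV - {p}"] by (simp add: sum_diff1 algebra_simps)
qed

(* If every other entry is smaller than s/m in modulus, they are all negative: otherwise the
   remaining m entries could not add up to at most -s. *)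
lemma others_negative:
  assumes small: "\<And>j. j \<noteq> p \<Longrightarrow> (real CARD('n) - 2) * \<bar>u j\<bar> < - sum u UNIV"
    and "i \<noteq> p"
  shows "u i < 0"
proof (rule ccontr)
  assume "\<not> u i < 0"
  define R where "R = UNIV - {p, i}"
  have card_R: "real (card R) = real CARD('n) - 2"
    using \<open>i \<noteq> p\<close> card_ge_3 by (simp add: R_def card_Diff_subset)
  then have "R \<noteq> {}"
    using card_ge_3 by auto
  then have "(\<Sum>j\<in>R. (real CARD('n) - 2) * \<bar>u j\<bar>) < (\<Sum>j\<in>R. - sum u UNIV)"
    by (intro sum_strict_mono small) (auto simp: R_def)
  then have "(real CARD('n) - 2) * (\<Sum>j\<in>R. \<bar>u j\<bar>) < (real CARD('n) - 2) * (- sum u UNIV)"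
    by (simp add: card_R sum_distrib_left)
  then have "(\<Sum>j\<in>R. \<bar>u j\<bar>) < - sum u UNIV"
    by (rule mult_left_less_imp_less) (use card_ge_3 in simp)
  moreover have "sum u UNIV = sum u R + sum u {p, i}"
    unfolding R_def by (rule sum.subset_diff) auto
  moreover have "sum u {p, i} = u p + u i"
    using \<open>i \<noteq> p\<close> by simp
  moreover have "- sum u R \<le> (\<Sum>j\<in>R. \<bar>u j\<bar>)"
    unfolding sum_negf[symmetric] by (rule sum_mono) simp
  moreover have "0 \<le> u p"
    using u_p_max[of p] by simp
  ultimately show False
    using \<open>\<not> u i < 0\<close> by linarith
qed

(* With the threshold tau = s/m, test with P = {u \<ge> tau} and N = {u \<le> -tau}; the entries
   below the threshold contribute at least -tau each, and the result is the constraint of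
   ratio_bound with h the number of entries of modulus at least tau. *)
lemma threshold_estimate:
  assumes tau_pos: "0 < \<tau>" and tau: "(real CARD('n) - 2) * \<tau> = - sum u UNIV"
    and tau_le: "\<tau> \<le> u p"
  defines "h \<equiv> real (card {i. \<tau> \<le> \<bar>u i\<bar>})"
  shows "2 * ((real CARD('n) - 2) * u p) + 2 * (- sum u UNIV) * (h - 2) \<le> h"
proof -
  define P where "P = {i. \<tau> \<le> u i}"
  define N where "N = {i. u i \<le> - \<tau>}"
  define Low where "Low = {i. \<bar>u i\<bar> < \<tau>}"
  define m where "m = real CARD('n) - 2"
  have disj: "P \<inter> N = {}" "(P \<union> N) \<inter> Low = {}"
    using tau_pos by (auto simp: P_def N_def Low_def)
  have cover: "(P \<union> N) \<union> Low = UNIV" and high: "{i. \<tau> \<le> \<bar>u i\<bar>} = P \<union> N"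
    by (auto simp: P_def N_def Low_def abs_if)
  have "top_signed u P N"
    using tau_pos by (fastforce simp: top_signed_def P_def N_def)
  then have test: "m * (sum u P - sum u N) + sum u UNIV * (real (card P) - real (card N))
      \<le> real (card P) + real (card N)"
    unfolding m_def by (rule set_test)
  have h: "h = real (card P) + real (card N)"
    using disj(1) by (simp add: h_def high card_Un_disjoint)
  have total_sum: "sum u UNIV = sum u P + sum u N + sum u Low"
    using disj by (simp add: cover[symmetric] sum.union_disjoint)
  have total_card: "m = real (card P) + real (card N) + real (card Low) - 2"
    using disj by (simp add: m_def cover[symmetric] card_Un_disjoint)
  have "u p + (real (card P) - 1) * \<tau> \<le> sum u P"
    using tau_le by (intro sum_ge_point_plus_rest) (auto simp: P_def)
  then have "m * (u p + (real (card P) - 1) * \<tau>) \<le> m * sum u P"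
    using card_ge_3 by (intro mult_left_mono) (simp_all add: m_def)
  moreover have "m * ((real (card P) - 1) * \<tau>) = - ((real (card P) - 1) * sum u UNIV)"
    using tau by (simp add: m_def mult.left_commute)
  ultimately have P_lower: "m * u p - (real (card P) - 1) * sum u UNIV \<le> m * sum u P"
    by (simp add: distrib_left)
  have "real (card Low) * (- \<tau>) \<le> sum u Low"
    by (intro sum_bounded_below) (simp add: Low_def abs_less_iff)
  then have "m * (real (card Low) * (- \<tau>)) \<le> m * sum u Low"
    using card_ge_3 by (intro mult_left_mono) (simp_all add: m_def)
  moreover have "m * (real (card Low) * (- \<tau>)) = real (card Low) * sum u UNIV"
    using tau by (simp add: m_def mult.left_commute)
  ultimately have Low_lower: "real (card Low) * sum u UNIV \<le> m * sum u Low"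
    by simp
  have "m * sum u N = m * sum u UNIV - m * sum u P - m * sum u Low"
    by (simp add: total_sum algebra_simps)
  moreover have "m * sum u UNIV = (real (card P) + real (card N) + real (card Low) - 2) * sum u UNIV"
    by (simp add: total_card)
  ultimately show ?thesis
    using test P_lower Low_lower unfolding h m_def[symmetric] by (simp add: algebra_simps)
qed

(* If some entry other than u_p reaches the threshold s/m, the threshold test yields at least
   two high entries and ratio_bound applies. *)
lemma bound_with_second_high_entry:
  assumes s_pos: "0 < - sum u UNIV" and "q \<noteq> p"
    and q_high: "- sum u UNIV \<le> (real CARD('n) - 2) * \<bar>u q\<bar>"
  shows "(real CARD('n) - 2) * u p \<le> (3 * real CARD('n) - 4) / (2 * real CARD('n) - 2)"
proof -
  define m where "m = real CARD('n) - 2"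
  define s where "s = - sum u UNIV"
  define \<tau> where "\<tau> = s / m"
  have m_pos: "0 < m"
    using card_ge_3 by (simp add: m_def)
  have "0 < s" "s \<le> m * \<bar>u q\<bar>"
    using s_pos q_high by (simp_all add: s_def m_def)
  then have tau_pos: "0 < \<tau>" and tau: "m * \<tau> = s" and "\<tau> \<le> \<bar>u q\<bar>"
    using m_pos by (simp_all add: \<tau>_def pos_divide_le_eq mult.commute)
  then have high: "\<tau> \<le> \<bar>u q\<bar>" "\<tau> \<le> u p"
    using u_p_max[of q] by auto
  define h where "h = real (card {i. \<tau> \<le> \<bar>u i\<bar>})"
  have "2 * (m * u p) + 2 * s * (h - 2) \<le> h"
    using threshold_estimate[OF tau_pos _ high(2)] tau by (simp add: m_def s_def h_def)
  moreover have "2 \<le> h"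
  proof -
    have "{p, q} \<subseteq> {i. \<tau> \<le> \<bar>u i\<bar>}"
      using high by auto
    from card_mono[OF _ this] show ?thesis
      using \<open>q \<noteq> p\<close> by (simp add: h_def)
  qed
  moreover have "h \<le> real CARD('n)"
    by (simp add: h_def card_mono)
  moreover have "m * u p - 1 \<le> s"
    using test_at_max by (simp add: m_def s_def)
  ultimately show ?thesis
    by (simp add: m_def ratio_bound)
qed

(* The combinatorial core: m u_p \<le> (3n - 4)/(2n - 2), by cases on the sign of s and on whether
   some other entry reaches the threshold s/m. *)
lemma scaled_max_bound:
  "(real CARD('n) - 2) * u p \<le> (3 * real CARD('n) - 4) / (2 * real CARD('n) - 2)"
proof -
  define m where "m = real CARD('n) - 2"
  define s where "s = - sum u UNIV"
  have near_one: "m * u p - 1 \<le> s"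
    using test_at_max by (simp add: m_def s_def)
  consider (sum_nonneg) "s \<le> 0"
    | (two_high) q where "0 < s" "q \<noteq> p" "s \<le> m * \<bar>u q\<bar>"
    | (one_high) "0 < s" "\<And>q. q \<noteq> p \<Longrightarrow> m * \<bar>u q\<bar> < s"
    by (meson not_le)
  then show ?thesis
  proof cases
    case sum_nonneg
    have "1 \<le> (3 * real CARD('n) - 4) / (2 * real CARD('n) - 2)"
      using card_ge_3 by (simp add: field_simps)
    then show ?thesis
      using near_one sum_nonneg by (simp add: m_def)
  next
    case two_high
    then show ?thesis
      using bound_with_second_high_entry by (simp add: m_def s_def)
  next
    case one_high
    then have "u i \<le> 0" if "i \<noteq> p" for i
      using others_negative[of i] that by (simp add: m_def s_def less_imp_le)
    then have "2 * (m * u p) + 2 * s * (real CARD('n) - 2) \<le> real CARD('n)"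
      using isolated_max_estimate by (simp add: m_def s_def algebra_simps)
    with near_one card_ge_3 show ?thesis
      by (intro ratio_bound[where h = "real CARD('n)" and s = s]) (simp_all add: m_def)
  qed
qed

end

(* Scaling by L turns bounded_solution_test into the hypothesis of the core bound, which
   bounds the largest entry of x when it is nonnegative. *)
lemma solution_bound_at_max:
  fixes A :: "real^'n^'n" and x :: "real^'n"
  assumes card_ge_3: "3 \<le> CARD('n)"
    and sym: "\<And>i j. A $ i $ j = A $ j $ i" and nonneg: "\<And>i j. 0 \<le> A $ i $ j"
    and dd: "\<And>i. 0 \<le> Delta A i" and off_ge: "\<And>i j. i \<noteq> j \<Longrightarrow> L \<le> A $ i $ j"
    and L_pos: "0 < L"
    and bounded: "\<And>i. \<bar>(A *v x) $ i\<bar> \<le> 1" and x_p_max: "\<And>i. \<bar>x $ i\<bar> \<le> x $ p"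
  shows "x $ p \<le> (3 * real CARD('n) - 4) / (2 * L * (real CARD('n) - 2) * (real CARD('n) - 1))"
proof -
  define u where "u = (\<lambda>i. L * x $ i)"
  have "(real CARD('n) - 2) * u p \<le> (3 * real CARD('n) - 4) / (2 * real CARD('n) - 2)"
  proof (rule scaled_max_bound[OF card_ge_3])
    show "\<bar>u i\<bar> \<le> u p" for i
      using x_p_max[of i] L_pos by (simp add: u_def abs_mult)
    show "(real CARD('n) - 2) * (sum u P - sum u N) + sum u UNIV * (real (card P) - real (card N))
        \<le> real (card P) + real (card N)" if "top_signed u P N" for P N
    proof -
      have "top_signed (($) x) P N"
        using that top_signed_scale[OF L_pos, of "($) x"] by (simp add: u_def)
      from bounded_solution_test[OF sym nonneg dd off_ge bounded this] show ?thesis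
        by (simp add: u_def algebra_simps flip: sum_distrib_left)
    qed
  qed
  moreover have "0 < 2 * real CARD('n) - 2" and denom_pos: "0 < 2 * L * (real CARD('n) - 2) * (real CARD('n) - 1)"
    using card_ge_3 L_pos by simp_all
  ultimately have "(real CARD('n) - 2) * u p * (2 * real CARD('n) - 2) \<le> 3 * real CARD('n) - 4"
    by (simp add: pos_le_divide_eq)
  moreover have "(real CARD('n) - 2) * u p * (2 * real CARD('n) - 2)
      = x $ p * (2 * L * (real CARD('n) - 2) * (real CARD('n) - 1))"
    by (simp add: u_def algebra_simps)
  ultimately show ?thesis
    by (simp add: pos_le_divide_eq[OF denom_pos])
qed

(* The bound on every entry of a solution of |A x| \<le> 1; a negative maximum is handled by
   passing to -x. *)
lemma solution_bound:
  fixes A :: "real^'n^'n" and x :: "real^'n"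
  assumes card_ge_3: "3 \<le> CARD('n)"
    and sym: "\<And>i j. A $ i $ j = A $ j $ i" and nonneg: "\<And>i j. 0 \<le> A $ i $ j"
    and dd: "\<And>i. 0 \<le> Delta A i" and off_ge: "\<And>i j. i \<noteq> j \<Longrightarrow> L \<le> A $ i $ j"
    and L_pos: "0 < L" and bounded: "\<And>i. \<bar>(A *v x) $ i\<bar> \<le> 1"
  shows "\<bar>x $ k\<bar> \<le> (3 * real CARD('n) - 4) / (2 * L * (real CARD('n) - 2) * (real CARD('n) - 1))"
proof -
  have at_max: "y $ q \<le> (3 * real CARD('n) - 4) / (2 * L * (real CARD('n) - 2) * (real CARD('n) - 1))"
    if "\<And>i. \<bar>(A *v y) $ i\<bar> \<le> 1" "\<And>i. \<bar>y $ i\<bar> \<le> y $ q" for y q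
    by (rule solution_bound_at_max) (use card_ge_3 sym nonneg dd off_ge L_pos that in auto)
  have "Max (range (\<lambda>i. \<bar>x $ i\<bar>)) \<in> range (\<lambda>i. \<bar>x $ i\<bar>)"
    by (rule Max_in) auto
  then obtain p where p: "Max (range (\<lambda>i. \<bar>x $ i\<bar>)) = \<bar>x $ p\<bar>"
    by blast
  have p_max: "\<bar>x $ i\<bar> \<le> \<bar>x $ p\<bar>" for i
    unfolding p[symmetric] by (rule Max_ge) auto
  have "\<bar>x $ p\<bar> \<le> (3 * real CARD('n) - 4) / (2 * L * (real CARD('n) - 2) * (real CARD('n) - 1))"
  proof (cases "0 \<le> x $ p")
    case True
    then show ?thesis
      using at_max[of x p] bounded p_max by simp
  next
    case False
    have "\<bar>(A *v (- x)) $ i\<bar> \<le> 1" for i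
      using bounded[of i] by (simp add: matrix_vector_mult_def sum_negf)
    then show ?thesis
      using at_max[of "- x" p] p_max False by simp
  qed
  then show ?thesis
    using p_max[of k] by linarith
qed

lemma matrix_inv_right:
  fixes A :: "'a::semiring_1^'n^'n"
  assumes "invertible A"
  shows "A ** matrix_inv A = mat 1"
proof -
  have "\<exists>A'. A ** A' = mat 1 \<and> A' ** A = mat 1"
    using assms by (simp add: invertible_def)
  then have "A ** matrix_inv A = mat 1 \<and> matrix_inv A ** A = mat 1"
    unfolding matrix_inv_def by (rule someI_ex)
  then show ?thesis
    by simp
qed

(* A uniform bound on all solutions of |A x| \<le> 1 forces the kernel of A to be trivial, since
   a kernel vector could be scaled arbitrarily. *)
lemma invertible_if_solutions_bounded:
  fixes A :: "real^'n^'n"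
  assumes bound: "\<And>x k. (\<And>i. \<bar>(A *v x) $ i\<bar> \<le> 1) \<Longrightarrow> \<bar>x $ k\<bar> \<le> B"
  shows "invertible A"
proof -
  have "x $ k = 0" if kernel: "A *v x = 0" for x k
  proof (rule ccontr)
    assume "x $ k \<noteq> 0"
    define c where "c = (\<bar>B\<bar> + 1) / \<bar>x $ k\<bar>"
    have "A *v (c *s x) = c *s (A *v x)"
      by (simp add: vec_eq_iff matrix_vector_mult_def sum_distrib_left algebra_simps)
    then have "\<bar>(c *s x) $ k\<bar> \<le> B"
      using kernel by (intro bound) simp
    moreover have "\<bar>(c *s x) $ k\<bar> = \<bar>B\<bar> + 1"
      using \<open>x $ k \<noteq> 0\<close> by (simp add: c_def abs_mult)
    ultimately show False
      by linarith
  qed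
  then show ?thesis
    unfolding invertible_left_inverse matrix_left_invertible_ker by (simp add: vec_eq_iff)
qed

lemma inf_norm_le:
  assumes "\<And>i. (\<Sum>j\<in>UNIV. \<bar>A $ i $ j\<bar>) \<le> c"
  shows "inf_norm A \<le> c"
  using assms by (simp add: inf_norm_def)

lemma inf_norm_nonneg: "0 \<le> inf_norm A"
proof -
  have "0 \<le> (\<Sum>j\<in>UNIV. \<bar>A $ i $ j\<bar>)" for i
    by (simp add: sum_nonneg)
  also have "(\<Sum>j\<in>UNIV. \<bar>A $ i $ j\<bar>) \<le> inf_norm A" for i
    unfolding inf_norm_def by (rule Max_ge) auto
  finally show ?thesis .
qed

(* A bound B on the solutions of |A x| \<le> 1 bounds the row sums of the inverse: row i of the
   inverse is read off by applying it to the sign vector of that row. *)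
lemma inf_norm_inverse_le:
  fixes A :: "real^'n^'n"
  assumes "invertible A"
    and bound: "\<And>x k. (\<And>i. \<bar>(A *v x) $ i\<bar> \<le> 1) \<Longrightarrow> \<bar>x $ k\<bar> \<le> B"
  shows "inf_norm (matrix_inv A) \<le> B"
proof (rule inf_norm_le)
  fix i
  define b where "b = (\<chi> j. if 0 \<le> matrix_inv A $ i $ j then 1 else - (1 :: real))"
  define z where "z = matrix_inv A *v b"
  have "A *v z = b"
    by (simp add: z_def matrix_vector_mul_assoc matrix_inv_right[OF assms(1)])
  then have "\<bar>z $ i\<bar> \<le> B"
    by (intro bound) (simp add: b_def)
  moreover have "z $ i = (\<Sum>j\<in>UNIV. \<bar>matrix_inv A $ i $ j\<bar>)"
    unfolding z_def matrix_vector_mult_def b_def by (intro trans[OF vec_lambda_beta] sum.cong) auto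
  ultimately show "(\<Sum>j\<in>UNIV. \<bar>matrix_inv A $ i $ j\<bar>) \<le> B"
    by simp
qed

(* Each row sum of a nonnegative matrix equals Delta_i plus twice its off-diagonal part. *)
lemma inf_norm_le_offdiag_bound:
  fixes A :: "real^'n^'n"
  assumes nonneg: "\<And>i j. 0 \<le> A $ i $ j" and off_le: "\<And>i j. i \<noteq> j \<Longrightarrow> A $ i $ j \<le> M"
    and delta_le: "\<And>i. Delta A i \<le> \<delta>"
  shows "inf_norm A \<le> 2 * M * (real CARD('n) - 1) + \<delta>"
proof (rule inf_norm_le)
  fix i
  have "(\<Sum>j\<in>UNIV. \<bar>A $ i $ j\<bar>) = \<bar>A $ i $ i\<bar> + (\<Sum>j\<in>UNIV - {i}. \<bar>A $ i $ j\<bar>)"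
    by (rule sum.remove) auto
  also have "\<dots> = Delta A i + 2 * (\<Sum>j\<in>UNIV - {i}. A $ i $ j)"
    using nonneg by (simp add: Delta_def)
  also have "(\<Sum>j\<in>UNIV - {i}. A $ i $ j) \<le> real (card (UNIV - {i} :: 'n set)) * M"
    using off_le by (intro sum_bounded_above) auto
  also have "real (card (UNIV - {i} :: 'n set)) = real CARD('n) - 1"
    by (simp add: card_Diff_singleton Suc_le_eq)
  finally show "(\<Sum>j\<in>UNIV. \<bar>A $ i $ j\<bar>) \<le> 2 * M * (real CARD('n) - 1) + \<delta>"
    using delta_le[of i] by (simp add: algebra_simps)
qed

lemma entry_extremes:
  fixes A :: "real^'n^'n"
  shows "Min {A $ i $ j |i j. True} \<le> A $ i $ j"
    and "\<exists>i j. Min {A $ i $ j |i j. True} = A $ i $ j"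
    and "i \<noteq> j \<Longrightarrow> A $ i $ j \<le> Max {A $ i $ j |i j. i \<noteq> j}"
proof -
  have finite: "finite {A $ i $ j |i j. P i j}" for P
    by (rule finite_subset[of _ "(\<lambda>(i, j). A $ i $ j) ` UNIV"]) auto
  show "Min {A $ i $ j |i j. True} \<le> A $ i $ j"
    by (rule Min_le[OF finite]) auto
  have "Min {A $ i $ j |i j. True} \<in> {A $ i $ j |i j. True}"
    by (rule Min_in[OF finite]) auto
  then show "\<exists>i j. Min {A $ i $ j |i j. True} = A $ i $ j"
    by blast
  show "A $ i $ j \<le> Max {A $ i $ j |i j. i \<noteq> j}" if "i \<noteq> j"
    using that by (intro Max_ge[OF finite]) auto
qed

theorem mainTheorem5:
  fixes A :: "real^'n^'n"
  assumes "CARD('n) \<ge> 3"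
    and "transpose A = A"
    and "diag_dominant A"
    and "\<forall>i j. A $ i $ j > 0"
  defines "m \<equiv> Max {A $ i $ j | i j. i \<noteq> j}"
    and "l \<equiv> Min {A $ i $ j | i j. True}"
    and "\<delta> \<equiv> Max (range (Delta A))"
    and "n \<equiv> real CARD('n)"
  shows "invertible A \<and>
    cond_inf A \<le> (2 * m * (n - 1) + \<delta>) * (3 * n - 4) / (2 * l * (n - 2) * (n - 1))"
proof -
  have sym: "A $ i $ j = A $ j $ i" for i j
    using arg_cong[OF assms(2), of "\<lambda>B. B $ i $ j"] by (simp add: transpose_def)
  have dd: "0 \<le> Delta A i" and pos: "0 < A $ i $ j" for i j
    using assms(3,4) by (simp_all add: diag_dominant_def)
  have l_le: "l \<le> A $ i $ j" and m_ge: "i \<noteq> j \<Longrightarrow> A $ i $ j \<le> m" for i j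
    unfolding l_def m_def by (rule entry_extremes)+
  have l_pos: "0 < l"
    using entry_extremes(2)[of A] pos by (auto simp: l_def)
  have delta_ge: "Delta A i \<le> \<delta>" for i
    unfolding \<delta>_def by (rule Max_ge) auto
  define B where "B = (3 * n - 4) / (2 * l * (n - 2) * (n - 1))"
  have bound: "\<bar>x $ k\<bar> \<le> B" if "\<And>i. \<bar>(A *v x) $ i\<bar> \<le> 1" for x k
    unfolding B_def n_def
    by (rule solution_bound) (use assms(1) sym dd pos l_le l_pos that in \<open>auto intro: less_imp_le\<close>)
  have inv: "invertible A"
    using bound by (rule invertible_if_solutions_bounded)
  have "cond_inf A \<le> (2 * m * (n - 1) + \<delta>) * B"
    unfolding cond_inf_def n_def
  proof (rule mult_mono)
    show "inf_norm A \<le> 2 * m * (real CARD('n) - 1) + \<delta>"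
      using pos m_ge delta_ge by (intro inf_norm_le_offdiag_bound) (auto intro: less_imp_le)
    show "inf_norm (matrix_inv A) \<le> B"
      using inv bound by (rule inf_norm_inverse_le)
    show "0 \<le> 2 * m * (real CARD('n) - 1) + \<delta>"
      using inf_norm_nonneg \<open>inf_norm A \<le> _\<close> by (rule order_trans)
  qed (rule inf_norm_nonneg)
  with inv show ?thesis
    by (simp add: B_def)
qed

end
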